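(* Let $w\in\mathfrak{S}_n$ and let $\varphi$ be a graph automorphism of $\Gamma(e,w)$ with $\varphi(w)=e$. (1) If $i<j<k$ and $w(i)>w(j)>w(k)$, then there exist $a<b<c$ with $w\ge t_{ac}$ such that $\varphi(\{wt_{ij},wt_{ik},wt_{jk}\})=\{t_{ab},t_{ac},t_{bc}\}$. (2) If $a<b<c$ and $w\ge t_{ac}$, then there exist $i<j<k$ with $w(i)>w(j)>w(k)$ such that $\varphi^{-1}(\{t_{ab},t_{ac},t_{bc}\})=\{wt_{ij},wt_{ik},wt_{jk}\}$.
   Context: $\mathfrak{S}_n$ is the symmetric group with simple generators $s_i=(i\ i{+}1)$; products are compositions $(uv)(m)=u(v(m))$. $t_{ij}$ denotes the transposition $(i\ j)$ for $i<j$; these are the reflections. $\le$ is Bruhat order and $e$ the identity. $\Gamma(e,w)$ is the simple undirected graph with vertex set $[e,w]=\{x:x\le w\}$ and edges $\{x,y\}$ whenever $y=xt$ for a transposition $t$. *)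

theory Defs
  imports "HOL-Combinatorics.Combinatorics"
begin

text \<open>Permutations of [n] = {1..n}, as functions nat => nat fixing everything outside {1..n}.
  Product uv is composition u o v. The transposition t_ij is transpose i j.\<close>

definition perms :: "nat \<Rightarrow> (nat \<Rightarrow> nat) set" where
  "perms n = {p. p permutes {1..n}}"

definition refl_trans :: "nat \<Rightarrow> nat \<Rightarrow> nat \<Rightarrow> bool" where
  "refl_trans n i j \<longleftrightarrow> 1 \<le> i \<and> i < j \<and> j \<le> n"

definition inv_num :: "nat \<Rightarrow> (nat \<Rightarrow> nat) \<Rightarrow> nat" where
  "inv_num n x = card {(i, j). 1 \<le> i \<and> i < j \<and> j \<le> n \<and> x i > x j}"

definition bruhat_step :: "nat \<Rightarrow> (nat \<Rightarrow> nat) \<Rightarrow> (nat \<Rightarrow> nat) \<Rightarrow> bool" where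
  "bruhat_step n x y \<longleftrightarrow> x \<in> perms n \<and>
     (\<exists>i j. refl_trans n i j \<and> y = x \<circ> transpose i j) \<and> inv_num n x < inv_num n y"

definition bruhat_le :: "nat \<Rightarrow> (nat \<Rightarrow> nat) \<Rightarrow> (nat \<Rightarrow> nat) \<Rightarrow> bool" where
  "bruhat_le n x y \<longleftrightarrow> x \<in> perms n \<and> y \<in> perms n \<and> (bruhat_step n)\<^sup>*\<^sup>* x y"

definition bruhat_interval :: "nat \<Rightarrow> (nat \<Rightarrow> nat) \<Rightarrow> (nat \<Rightarrow> nat) set" where
  "bruhat_interval n w = {x. bruhat_le n x w}"

definition gamma_adj :: "nat \<Rightarrow> (nat \<Rightarrow> nat) \<Rightarrow> (nat \<Rightarrow> nat) \<Rightarrow> bool" where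
  "gamma_adj n x y \<longleftrightarrow> (\<exists>i j. refl_trans n i j \<and> y = x \<circ> transpose i j)"

definition gamma_aut :: "nat \<Rightarrow> (nat \<Rightarrow> nat) \<Rightarrow> ((nat \<Rightarrow> nat) \<Rightarrow> (nat \<Rightarrow> nat)) \<Rightarrow> bool" where
  "gamma_aut n w \<phi> \<longleftrightarrow> bij_betw \<phi> (bruhat_interval n w) (bruhat_interval n w) \<and>
     (\<forall>x\<in>bruhat_interval n w. \<forall>y\<in>bruhat_interval n w.
        gamma_adj n x y \<longleftrightarrow> gamma_adj n (\<phi> x) (\<phi> y))"

end

theory Submission
  imports Defs
begin

text \<open>
  Since phi is a graph automorphism with phi w = e, it sends the neighbours w t of w to
  transpositions. If i < j < k and w(i) > w(j) > w(k), the whole coset w S_{i,j,k} lies below w,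
  so w t_ij, w t_ik, w t_jk are three distinct neighbours of w with the second common neighbour
  w t_ij t_jk. Their images are three distinct transpositions t with t s = u for transpositions s
  and one and the same u <> e. A product of two disjoint transpositions has only its two factors
  as such left factors, so u is a 3-cycle on some a < b < c and the images are t_ab, t_ac, t_bc.
  Part (2) is the same argument for the inverse automorphism, applied to the coset t_ac S_{a,b,c},
  which lies below t_ac <= w.
\<close>

lemma inv_num_comp_transpose_less:
  assumes "x j < x i" "1 \<le> i" "i < j" "j \<le> n"
  shows "inv_num n (x \<circ> transpose i j) < inv_num n x"
proof -
  let ?t = "transpose i j"
  define Sy where "Sy = {(a, b). 1 \<le> a \<and> a < b \<and> b \<le> n \<and> (x \<circ> ?t) a > (x \<circ> ?t) b}"
  define Sx where "Sx = {(a, b). 1 \<le> a \<and> a < b \<and> b \<le> n \<and> x a > x b}"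
  \<comment> \<open>an inversion (a, b) of x t gives the inversion {t a, t b} of x, which is never {i, j}\<close>
  define f where "f = (\<lambda>(a::nat, b::nat). if ?t a < ?t b then (?t a, ?t b) else (a, b))"
  have finx: "finite Sx"
    by (rule finite_subset[of _ "{1..n} \<times> {1..n}"]) (auto simp: Sx_def)
  have ij: "(i, j) \<in> Sx" using assms by (auto simp: Sx_def)
  have img: "f ` Sy \<subseteq> Sx - {(i, j)}"
  proof
    fix z assume "z \<in> f ` Sy"
    then obtain a b where ab: "(a, b) \<in> Sy" and z: "z = f (a, b)" by auto
    from ab have "1 \<le> a" "a < b" "b \<le> n" "x (?t a) > x (?t b)" by (auto simp: Sy_def)
    then show "z \<in> Sx - {(i, j)}"
      using assms unfolding z f_def Sx_def
      by (auto simp: transpose_def split: if_splits)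
  qed
  have inj: "inj_on f Sy"
    unfolding inj_on_def f_def Sy_def
    using assms by (auto simp: transpose_def split: if_splits)
  have "inv_num n (x \<circ> ?t) = card Sy" by (simp add: inv_num_def Sy_def)
  also have "\<dots> = card (f ` Sy)" using inj by (simp add: card_image)
  also have "\<dots> \<le> card (Sx - {(i, j)})" using img finx by (intro card_mono) auto
  also have "\<dots> < card Sx" by (rule card_Diff1_less[OF finx ij])
  also have "\<dots> = inv_num n x" by (simp add: inv_num_def Sx_def)
  finally show ?thesis .
qed

lemma perms_comp_transpose:
  "v \<in> perms n \<Longrightarrow> refl_trans n i j \<Longrightarrow> v \<circ> transpose i j \<in> perms n"
  unfolding perms_def refl_trans_def
  by (auto intro!: permutes_compose permutes_swap_id)

lemma perms_inj: "v \<in> perms n \<Longrightarrow> inj v"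
  unfolding perms_def by (auto intro: permutes_inj)

lemma bruhat_le_inv_num: "bruhat_le n x y \<Longrightarrow> inv_num n x \<le> inv_num n y"
  unfolding bruhat_le_def
  by (auto elim!: rtranclp_induct simp: bruhat_step_def)

lemma bruhat_le_perms: "bruhat_le n x y \<Longrightarrow> x \<in> perms n"
  by (simp add: bruhat_le_def)

lemma bruhat_le_refl: "v \<in> perms n \<Longrightarrow> bruhat_le n v v"
  unfolding bruhat_le_def by auto

lemma bruhat_le_trans: "bruhat_le n x y \<Longrightarrow> bruhat_le n y z \<Longrightarrow> bruhat_le n x z"
  unfolding bruhat_le_def by auto

lemma bruhat_le_comp_transpose_iff:
  assumes v: "v \<in> perms n" and ij: "1 \<le> i" "i < j" "j \<le> n"
  shows "bruhat_le n (v \<circ> transpose i j) v \<longleftrightarrow> v j < v i"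
proof
  assume le: "bruhat_le n (v \<circ> transpose i j) v"
  have "v i \<noteq> v j"
    using perms_inj[OF v] ij by (auto dest: injD)
  moreover have "\<not> v i < v j"
  proof
    assume "v i < v j"
    then have "inv_num n (v \<circ> transpose i j \<circ> transpose i j) < inv_num n (v \<circ> transpose i j)"
      using ij by (intro inv_num_comp_transpose_less) auto
    then show False using bruhat_le_inv_num[OF le] by (simp add: comp_assoc)
  qed
  ultimately show "v j < v i" by simp
next
  assume "v j < v i"
  have rt: "refl_trans n i j" using ij by (simp add: refl_trans_def)
  have "bruhat_step n (v \<circ> transpose i j) v"
    unfolding bruhat_step_def
  proof (intro conjI)
    show "\<exists>i' j'. refl_trans n i' j' \<and> v = v \<circ> transpose i j \<circ> transpose i' j'"
      using rt by (intro exI[of _ i] exI[of _ j]) (simp add: comp_assoc)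
    show "inv_num n (v \<circ> transpose i j) < inv_num n v"
      using \<open>v j < v i\<close> ij by (rule inv_num_comp_transpose_less)
  qed (rule perms_comp_transpose[OF v rt])
  then show "bruhat_le n (v \<circ> transpose i j) v"
    using perms_comp_transpose[OF v rt] v unfolding bruhat_le_def by auto
qed

lemma permutes_three_cases:
  assumes \<sigma>: "\<sigma> permutes {i, j, k}"
  shows "\<sigma> \<in> {id, transpose j k, transpose i j, transpose i j \<circ> transpose j k,
               transpose i k, transpose i k \<circ> transpose j k}"
proof -
  have "transpose i (\<sigma> i) \<circ> \<sigma> permutes {j, k}"
    using \<sigma> by (intro permutes_insert_lemma) simp
  then have q: "transpose i (\<sigma> i) \<circ> \<sigma> = id \<or> transpose i (\<sigma> i) \<circ> \<sigma> = transpose j k"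
    by (simp add: permutes_doubleton_iff)
  have eq: "\<sigma> = transpose i (\<sigma> i) \<circ> (transpose i (\<sigma> i) \<circ> \<sigma>)"
    by (simp flip: comp_assoc)
  have "\<sigma> i \<in> {i, j, k}"
    by (rule permutes_in_image[OF \<sigma>, THEN iffD2]) simp
  with q show ?thesis
    by (subst eq, elim insertE disjE emptyE) simp_all
qed

lemma bruhat_le_comp_permutes_three:
  assumes v: "v \<in> perms n" and ijk: "1 \<le> i" "i < j" "j < k" "k \<le> n"
    and dec: "v j < v i" "v k < v j" and \<sigma>: "\<sigma> permutes {i, j, k}"
  shows "bruhat_le n (v \<circ> \<sigma>) v"
proof -
  have rt: "refl_trans n i j" "refl_trans n i k" "refl_trans n j k"
    using ijk by (auto simp: refl_trans_def)
  have ij: "bruhat_le n (v \<circ> transpose i j) v"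
    and ik: "bruhat_le n (v \<circ> transpose i k) v"
    and jk: "bruhat_le n (v \<circ> transpose j k) v"
    using dec ijk bruhat_le_comp_transpose_iff[OF v] by simp_all
  have "bruhat_le n (v \<circ> transpose i j \<circ> transpose j k) (v \<circ> transpose i j)"
    using dec ijk bruhat_le_comp_transpose_iff[OF perms_comp_transpose[OF v rt(1)], of j k] by simp
  then have ijjk: "bruhat_le n (v \<circ> (transpose i j \<circ> transpose j k)) v"
    using ij by (auto simp only: comp_assoc[symmetric] intro: bruhat_le_trans)
  have "bruhat_le n (v \<circ> transpose j k \<circ> transpose i j) (v \<circ> transpose j k)"
    using dec ijk bruhat_le_comp_transpose_iff[OF perms_comp_transpose[OF v rt(3)], of i j] by simp
  moreover have "transpose i k \<circ> transpose j k = transpose j k \<circ> transpose i j"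
    using ijk swap_id_common'[of i j k] by simp
  ultimately have ikjk: "bruhat_le n (v \<circ> (transpose i k \<circ> transpose j k)) v"
    using jk by (auto simp only: comp_assoc[symmetric] intro: bruhat_le_trans)
  from permutes_three_cases[OF \<sigma>] show ?thesis
    using ij ik jk ijjk ikjk bruhat_le_refl[OF v] by (elim insertE emptyE) simp_all
qed

definition transposition_left_factors :: "('a \<Rightarrow> 'a) \<Rightarrow> ('a \<Rightarrow> 'a) set" where
  "transposition_left_factors u =
     {transpose x y | x y. x \<noteq> y \<and> (\<exists>x' y'. x' \<noteq> y' \<and> u = transpose x y \<circ> transpose x' y')}"

lemma transposition_left_factorsI:
  "x \<noteq> y \<Longrightarrow> x' \<noteq> y' \<Longrightarrow> u = transpose x y \<circ> transpose x' y'
    \<Longrightarrow> transpose x y \<in> transposition_left_factors u"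
  unfolding transposition_left_factors_def by blast

lemma transposition_left_factor_moves:
  assumes "u \<noteq> id" "x \<noteq> y" "u = transpose x y \<circ> transpose x' y'"
  shows "u x = y \<or> u y = x"
  using assms by (auto simp: transpose_def fun_eq_iff split: if_splits)

lemma card_3_sorted:
  fixes S :: "'a::linorder set"
  assumes "card S = 3"
  obtains a b c where "a < b" "b < c" "S = {a, b, c}"
proof -
  obtain x y z where S: "S = {x, y, z}" "x \<noteq> y" "y \<noteq> z" "x \<noteq> z"
    using card_3_iff[THEN iffD1, OF assms] by blast
  then show ?thesis using that
    by (cases x y rule: linorder_cases; cases y z rule: linorder_cases; cases x z rule: linorder_cases)
       (auto simp: insert_commute)
qed

lemma transposition_left_factors_disjoint:
  assumes "p \<noteq> q" "r \<noteq> s" "{p, q} \<inter> {r, s} = {}"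
  shows "transposition_left_factors (transpose p q \<circ> transpose r s) \<subseteq> {transpose p q, transpose r s}"
proof
  let ?u = "transpose p q \<circ> transpose r s"
  fix t assume "t \<in> transposition_left_factors ?u"
  then obtain x y x' y' where t: "t = transpose x y" "x \<noteq> y" "?u = transpose x y \<circ> transpose x' y'"
    unfolding transposition_left_factors_def by blast
  have "?u p \<noteq> p" using assms by auto
  then have "?u \<noteq> id" by (metis comp_apply id_apply)
  then have "?u x = y \<or> ?u y = x" using t transposition_left_factor_moves by metis
  then show "t \<in> {transpose p q, transpose r s}"
    using assms t(1,2) by (auto simp: transpose_def transpose_commute split: if_splits)
qed

lemma transposition_left_factors_overlapping:
  fixes p q r s :: "'a::linorder"
  assumes "p \<noteq> q" "r \<noteq> s" "{p, q} \<inter> {r, s} \<noteq> {}" "{p, q} \<noteq> {r, s}"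
  obtains a b c where "a < b" "b < c" "{p, q, r, s} = {a, b, c}"
    "transposition_left_factors (transpose p q \<circ> transpose r s)
       \<subseteq> {transpose a b, transpose a c, transpose b c}"
proof -
  let ?u = "transpose p q \<circ> transpose r s"
  have "card {p, q, r, s} = 3"
    using assms by (auto simp: card_insert_if)
  then obtain a b c where abc: "a < b" "b < c" "{p, q, r, s} = {a, b, c}"
    by (rule card_3_sorted)
  have "?u \<noteq> id"
    using assms by (auto simp: fun_eq_iff transpose_def)
  have "t \<in> {transpose a b, transpose a c, transpose b c}"
    if lf: "t \<in> transposition_left_factors ?u" for t
  proof -
    obtain x y x' y' where t: "t = transpose x y" "x \<noteq> y" "?u = transpose x y \<circ> transpose x' y'"
      using lf unfolding transposition_left_factors_def by blast
    then have "?u x = y \<or> ?u y = x"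
      using \<open>?u \<noteq> id\<close> transposition_left_factor_moves by metis
    then have "x \<in> {p, q, r, s}" "y \<in> {p, q, r, s}"
      using t(2) by (auto simp: transpose_def split: if_splits)
    then show ?thesis
      using abc(3) t(1,2) by (auto simp: transpose_commute)
  qed
  then show ?thesis using that abc by blast
qed

lemma three_transposition_left_factors:
  fixes u :: "'a::linorder \<Rightarrow> 'a"
  assumes u: "u = transpose p q \<circ> transpose r s" "p \<noteq> q" "r \<noteq> s" "u \<noteq> id"
    and T: "T \<subseteq> transposition_left_factors u" "card T = 3"
  obtains a b c where "a < b" "b < c" "{a, b, c} \<subseteq> {p, q, r, s}"
    "T = {transpose a b, transpose a c, transpose b c}"
proof -
  have "{p, q} \<noteq> {r, s}"
    using u by (auto simp: doubleton_eq_iff transpose_commute)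
  moreover have "{p, q} \<inter> {r, s} \<noteq> {}"
  proof
    assume "{p, q} \<inter> {r, s} = {}"
    then have "T \<subseteq> {transpose p q, transpose r s}"
      using transposition_left_factors_disjoint[OF u(2,3)] T(1) u(1) by blast
    moreover have "card {transpose p q, transpose r s} \<le> 2"
      by (simp add: card_insert_if)
    ultimately have "card T \<le> 2"
      by (metis card_mono finite.emptyI finite.insertI order_trans)
    then show False using T(2) by simp
  qed
  ultimately obtain a b c where abc: "a < b" "b < c" "{p, q, r, s} = {a, b, c}"
    and lf: "transposition_left_factors u \<subseteq> {transpose a b, transpose a c, transpose b c}"
    using transposition_left_factors_overlapping[OF u(2,3)] u(1) by metis
  have "T \<subseteq> {transpose a b, transpose a c, transpose b c}"
    using T(1) lf by blast
  moreover have "card {transpose a b, transpose a c, transpose b c} \<le> card T"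
    using T(2) by (simp add: card_insert_if)
  ultimately have "T = {transpose a b, transpose a c, transpose b c}"
    by (intro card_seteq) simp_all
  then show ?thesis using that abc by blast
qed

lemma gamma_adjI: "refl_trans n i j \<Longrightarrow> y = x \<circ> transpose i j \<Longrightarrow> gamma_adj n x y"
  unfolding gamma_adj_def by blast

lemma gamma_adj_two_steps:
  assumes "inj y" "gamma_adj n y Y" "gamma_adj n Y z"
  obtains p q r s where "refl_trans n p q" "refl_trans n r s" "Y = y \<circ> transpose p q"
    "z = Y \<circ> transpose r s" "inv y \<circ> z = transpose p q \<circ> transpose r s"
  using assms by (auto simp: gamma_adj_def o_assoc inv_o_cancel)

lemma gamma_adj_common_neighbours:
  assumes y: "inj y"
    and adj: "gamma_adj n y Y1" "gamma_adj n y Y2" "gamma_adj n y Y3"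
      "gamma_adj n Y1 z" "gamma_adj n Y2 z" "gamma_adj n Y3 z"
    and distinct: "Y1 \<noteq> Y2" "Y1 \<noteq> Y3" "Y2 \<noteq> Y3" "z \<noteq> y"
  obtains a b c where "1 \<le> a" "a < b" "b < c" "c \<le> n"
    "{Y1, Y2, Y3} = {y \<circ> transpose a b, y \<circ> transpose a c, y \<circ> transpose b c}"
proof -
  let ?u = "inv y \<circ> z"
  obtain p1 q1 r1 s1 where 1: "refl_trans n p1 q1" "refl_trans n r1 s1" "Y1 = y \<circ> transpose p1 q1"
    "z = Y1 \<circ> transpose r1 s1" "?u = transpose p1 q1 \<circ> transpose r1 s1"
    by (rule gamma_adj_two_steps[OF y adj(1,4)])
  obtain p2 q2 r2 s2 where 2: "refl_trans n p2 q2" "refl_trans n r2 s2" "Y2 = y \<circ> transpose p2 q2"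
    "z = Y2 \<circ> transpose r2 s2" "?u = transpose p2 q2 \<circ> transpose r2 s2"
    by (rule gamma_adj_two_steps[OF y adj(2,5)])
  obtain p3 q3 r3 s3 where 3: "refl_trans n p3 q3" "refl_trans n r3 s3" "Y3 = y \<circ> transpose p3 q3"
    "z = Y3 \<circ> transpose r3 s3" "?u = transpose p3 q3 \<circ> transpose r3 s3"
    by (rule gamma_adj_two_steps[OF y adj(3,6)])
  let ?T = "{transpose p1 q1, transpose p2 q2, transpose p3 q3}"
  have neq: "p1 \<noteq> q1" "r1 \<noteq> s1" "p2 \<noteq> q2" "r2 \<noteq> s2" "p3 \<noteq> q3" "r3 \<noteq> s3"
    using 1(1,2) 2(1,2) 3(1,2) by (auto simp: refl_trans_def)
  moreover have "?u \<noteq> id"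
  proof
    assume "?u = id"
    then have "z = y" using 1(3-5) by (simp add: comp_assoc)
    then show False using distinct(4) by contradiction
  qed
  moreover have "?T \<subseteq> transposition_left_factors ?u"
    using transposition_left_factorsI[OF neq(1,2) 1(5)] transposition_left_factorsI[OF neq(3,4) 2(5)]
      transposition_left_factorsI[OF neq(5,6) 3(5)] by blast
  moreover have "card ?T = 3"
  proof -
    have "transpose p1 q1 \<noteq> transpose p2 q2" "transpose p1 q1 \<noteq> transpose p3 q3"
      "transpose p2 q2 \<noteq> transpose p3 q3"
      using distinct(1-3) 1(3) 2(3) 3(3) by auto
    then show ?thesis by (simp add: card_insert_if)
  qed
  ultimately obtain a b c where abc: "a < b" "b < c" "{a, b, c} \<subseteq> {p1, q1, r1, s1}"
    and T: "?T = {transpose a b, transpose a c, transpose b c}"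
    using three_transposition_left_factors[OF 1(5) neq(1,2)] by blast
  have "1 \<le> a" "c \<le> n"
    using abc 1(1,2) by (auto simp: refl_trans_def)
  moreover have "{Y1, Y2, Y3} = (\<lambda>t. y \<circ> t) ` ?T"
    using 1(3) 2(3) 3(3) by simp
  ultimately show ?thesis
    using that abc T by simp
qed

lemma bij_betw_preimage_eq_inv_into_image:
  assumes "bij_betw f A A'" "B \<subseteq> A'"
  shows "{x \<in> A. f x \<in> B} = inv_into A f ` B"
proof
  show "{x \<in> A. f x \<in> B} \<subseteq> inv_into A f ` B"
  proof clarify
    fix x assume "x \<in> A" "f x \<in> B"
    moreover have "inv_into A f (f x) = x"
      using \<open>x \<in> A\<close> assms(1) by (simp add: bij_betw_imp_inj_on inv_into_f_f)
    ultimately show "x \<in> inv_into A f ` B" by (metis image_eqI)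
  qed
  show "inv_into A f ` B \<subseteq> {x \<in> A. f x \<in> B}"
    using assms by (auto simp: bij_betw_def inv_into_into f_inv_into_f)
qed

lemma gamma_aut_inv_into:
  assumes "gamma_aut n w \<phi>"
  shows "gamma_aut n w (inv_into (bruhat_interval n w) \<phi>)"
proof -
  let ?I = "bruhat_interval n w"
  let ?\<psi> = "inv_into ?I \<phi>"
  have bij: "bij_betw \<phi> ?I ?I"
    and adj: "\<And>x y. x \<in> ?I \<Longrightarrow> y \<in> ?I \<Longrightarrow> gamma_adj n x y \<longleftrightarrow> gamma_adj n (\<phi> x) (\<phi> y)"
    using assms unfolding gamma_aut_def by blast+
  have "gamma_adj n x y \<longleftrightarrow> gamma_adj n (?\<psi> x) (?\<psi> y)" if "x \<in> ?I" "y \<in> ?I" for x y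
  proof -
    have "x \<in> \<phi> ` ?I" "y \<in> \<phi> ` ?I"
      using that bij_betw_imp_surj_on[OF bij] by simp_all
    then have "?\<psi> x \<in> ?I" "?\<psi> y \<in> ?I" "\<phi> (?\<psi> x) = x" "\<phi> (?\<psi> y) = y"
      by (simp_all add: inv_into_into f_inv_into_f)
    then show ?thesis using adj by metis
  qed
  then show ?thesis
    using bij_betw_inv_into[OF bij] unfolding gamma_aut_def by blast
qed

lemma gamma_adj_comp_transpose_triangle:
  assumes y: "inj y" and ijk: "1 \<le> i" "i < j" "j < k" "k \<le> n"
  defines "Y1 \<equiv> y \<circ> transpose i j" and "Y2 \<equiv> y \<circ> transpose i k"
    and "Y3 \<equiv> y \<circ> transpose j k" and "z \<equiv> y \<circ> (transpose i j \<circ> transpose j k)"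
  shows "gamma_adj n y Y1" "gamma_adj n y Y2" "gamma_adj n y Y3"
    and "gamma_adj n Y1 z" "gamma_adj n Y2 z" "gamma_adj n Y3 z"
    and "Y1 \<noteq> Y2" "Y1 \<noteq> Y3" "Y2 \<noteq> Y3" "z \<noteq> y"
proof -
  have rt: "refl_trans n i j" "refl_trans n i k" "refl_trans n j k"
    using ijk by (auto simp: refl_trans_def)
  have "z = Y2 \<circ> transpose i j" "z = Y3 \<circ> transpose i k"
    unfolding Y2_def Y3_def z_def using ijk by (auto simp: fun_eq_iff transpose_def)
  moreover have "z = Y1 \<circ> transpose j k"
    unfolding Y1_def z_def by (simp add: comp_assoc)
  ultimately show "gamma_adj n y Y1" "gamma_adj n y Y2" "gamma_adj n y Y3"
    "gamma_adj n Y1 z" "gamma_adj n Y2 z" "gamma_adj n Y3 z"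
    unfolding Y1_def Y2_def Y3_def using rt by (blast intro: gamma_adjI)+
  have "y i \<noteq> y j" "y i \<noteq> y k" "y j \<noteq> y k"
    using y ijk by (simp_all add: inj_eq)
  moreover have "Y1 i = y j" "Y2 i = y k" "Y3 i = y i" "z i = y j"
    unfolding Y1_def Y2_def Y3_def z_def using ijk by simp_all
  ultimately show "Y1 \<noteq> Y2" "Y1 \<noteq> Y3" "Y2 \<noteq> Y3" "z \<noteq> y"
    by metis+
qed

lemma gamma_aut_image_triangle:
  assumes aut: "gamma_aut n w \<phi>" and ijk: "1 \<le> i" "i < j" "j < k" "k \<le> n"
    and coset: "\<And>\<sigma>. \<sigma> permutes {i, j, k} \<Longrightarrow> y \<circ> \<sigma> \<in> bruhat_interval n w"
  obtains a b c where "1 \<le> a" "a < b" "b < c" "c \<le> n"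
    "\<phi> ` {y \<circ> transpose i j, y \<circ> transpose i k, y \<circ> transpose j k}
       = {\<phi> y \<circ> transpose a b, \<phi> y \<circ> transpose a c, \<phi> y \<circ> transpose b c}"
proof -
  let ?I = "bruhat_interval n w"
  have bij: "bij_betw \<phi> ?I ?I"
    and adj: "\<And>x y. x \<in> ?I \<Longrightarrow> y \<in> ?I \<Longrightarrow> gamma_adj n x y \<longleftrightarrow> gamma_adj n (\<phi> x) (\<phi> y)"
    using aut unfolding gamma_aut_def by blast+
  have inj_in_I: "inj v" if "v \<in> ?I" for v
    using that unfolding bruhat_interval_def by (blast intro: perms_inj bruhat_le_perms)
  define Y1 Y2 Y3 z where "Y1 = y \<circ> transpose i j" and "Y2 = y \<circ> transpose i k"
    and "Y3 = y \<circ> transpose j k" and "z = y \<circ> (transpose i j \<circ> transpose j k)"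
  have "y \<circ> id \<in> ?I" by (rule coset) simp
  moreover have "Y1 \<in> ?I" "Y2 \<in> ?I" "Y3 \<in> ?I"
    unfolding Y1_def Y2_def Y3_def by (rule coset, rule permutes_swap_id, simp, simp)+
  moreover have "z \<in> ?I"
    unfolding z_def by (rule coset, intro permutes_compose permutes_swap_id) simp_all
  ultimately have mem: "y \<in> ?I" "Y1 \<in> ?I" "Y2 \<in> ?I" "Y3 \<in> ?I" "z \<in> ?I" by simp_all
  note triangle = gamma_adj_comp_transpose_triangle[OF inj_in_I[OF mem(1)] ijk,
      folded Y1_def Y2_def Y3_def z_def]
  have adj\<phi>: "gamma_adj n (\<phi> y) (\<phi> Y1)" "gamma_adj n (\<phi> y) (\<phi> Y2)" "gamma_adj n (\<phi> y) (\<phi> Y3)"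
    "gamma_adj n (\<phi> Y1) (\<phi> z)" "gamma_adj n (\<phi> Y2) (\<phi> z)" "gamma_adj n (\<phi> Y3) (\<phi> z)"
    using triangle(1-6) adj mem by blast+
  have distinct: "\<phi> Y1 \<noteq> \<phi> Y2" "\<phi> Y1 \<noteq> \<phi> Y3" "\<phi> Y2 \<noteq> \<phi> Y3" "\<phi> z \<noteq> \<phi> y"
    using triangle(7-10) bij_betw_imp_inj_on[OF bij] mem by (metis inj_onD)+
  obtain a b c where "1 \<le> a" "a < b" "b < c" "c \<le> n"
    "{\<phi> Y1, \<phi> Y2, \<phi> Y3} = {\<phi> y \<circ> transpose a b, \<phi> y \<circ> transpose a c, \<phi> y \<circ> transpose b c}"
    by (rule gamma_adj_common_neighbours[OF inj_in_I[OF bij_betw_apply[OF bij mem(1)]] adj\<phi> distinct])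
  then show ?thesis
    using that unfolding Y1_def Y2_def Y3_def by simp
qed

lemma gamma_aut_image_inversion_triple:
  assumes w: "w \<in> perms n" and aut: "gamma_aut n w \<phi>" and we: "\<phi> w = id"
    and ijk: "1 \<le> i" "i < j" "j < k" "k \<le> n" and dec: "w j < w i" "w k < w j"
  shows "\<exists>a b c. 1 \<le> a \<and> a < b \<and> b < c \<and> c \<le> n \<and> bruhat_le n (transpose a c) w \<and>
           \<phi> ` {w \<circ> transpose i j, w \<circ> transpose i k, w \<circ> transpose j k}
             = {transpose a b, transpose a c, transpose b c}"
proof -
  let ?I = "bruhat_interval n w"
  have coset: "w \<circ> \<sigma> \<in> ?I" if "\<sigma> permutes {i, j, k}" for \<sigma>
    using bruhat_le_comp_permutes_three[OF w ijk dec that] by (simp add: bruhat_interval_def)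
  obtain a b c where abc: "1 \<le> a" "a < b" "b < c" "c \<le> n"
    and "\<phi> ` {w \<circ> transpose i j, w \<circ> transpose i k, w \<circ> transpose j k}
           = {\<phi> w \<circ> transpose a b, \<phi> w \<circ> transpose a c, \<phi> w \<circ> transpose b c}"
    by (rule gamma_aut_image_triangle[OF aut ijk coset])
  then have img: "\<phi> ` {w \<circ> transpose i j, w \<circ> transpose i k, w \<circ> transpose j k}
      = {transpose a b, transpose a c, transpose b c}"
    by (simp add: we)
  have "{w \<circ> transpose i j, w \<circ> transpose i k, w \<circ> transpose j k} \<subseteq> ?I"
    by (auto intro!: coset permutes_swap_id)
  then have "transpose a c \<in> \<phi> ` ?I"
    using img by blast
  also have "\<phi> ` ?I = ?I"
    using aut by (simp add: gamma_aut_def bij_betw_imp_surj_on)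
  finally have "bruhat_le n (transpose a c) w"
    by (simp add: bruhat_interval_def)
  then show ?thesis
    using abc img by blast
qed

lemma gamma_aut_preimage_reflection_triple:
  assumes w: "w \<in> perms n" and aut: "gamma_aut n w \<phi>" and we: "\<phi> w = id"
    and abc: "1 \<le> a" "a < b" "b < c" "c \<le> n" and ac: "bruhat_le n (transpose a c) w"
  shows "\<exists>i j k. 1 \<le> i \<and> i < j \<and> j < k \<and> k \<le> n \<and> w i > w j \<and> w j > w k \<and>
           {x \<in> bruhat_interval n w. \<phi> x \<in> {transpose a b, transpose a c, transpose b c}}
             = {w \<circ> transpose i j, w \<circ> transpose i k, w \<circ> transpose j k}"
proof -
  let ?I = "bruhat_interval n w"
  let ?\<psi> = "inv_into ?I \<phi>"
  let ?T = "{transpose a b, transpose a c, transpose b c}"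
  have bij: "bij_betw \<phi> ?I ?I"
    using aut by (simp add: gamma_aut_def)
  have "w \<in> ?I"
    using w by (simp add: bruhat_interval_def bruhat_le_refl)
  then have \<psi>_id: "?\<psi> id = w"
    using bij we by (metis bij_betw_imp_inj_on inv_into_f_f)
  have below: "\<sigma> \<in> ?I" if \<sigma>: "\<sigma> permutes {a, b, c}" for \<sigma>
  proof -
    have "transpose a c \<circ> \<sigma> permutes {a, b, c}"
      using \<sigma> by (intro permutes_compose permutes_swap_id) simp_all
    then have "bruhat_le n (transpose a c \<circ> (transpose a c \<circ> \<sigma>)) (transpose a c)"
      using abc by (intro bruhat_le_comp_permutes_three[OF bruhat_le_perms[OF ac]]) simp_all
    then have "bruhat_le n \<sigma> (transpose a c)"
      by (simp flip: comp_assoc)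
    then show ?thesis
      using ac by (simp add: bruhat_interval_def bruhat_le_trans)
  qed
  then have coset: "id \<circ> \<sigma> \<in> ?I" if "\<sigma> permutes {a, b, c}" for \<sigma>
    using that by simp
  obtain i j k where ijk: "1 \<le> i" "i < j" "j < k" "k \<le> n"
    and "?\<psi> ` {id \<circ> transpose a b, id \<circ> transpose a c, id \<circ> transpose b c}
           = {?\<psi> id \<circ> transpose i j, ?\<psi> id \<circ> transpose i k, ?\<psi> id \<circ> transpose j k}"
    by (rule gamma_aut_image_triangle[OF gamma_aut_inv_into[OF aut] abc coset])
  then have img: "?\<psi> ` ?T = {w \<circ> transpose i j, w \<circ> transpose i k, w \<circ> transpose j k}"
    by (simp add: \<psi>_id)
  have "?T \<subseteq> ?I"
    using below by (simp add: permutes_swap_id)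
  then have "{x \<in> ?I. \<phi> x \<in> ?T} = ?\<psi> ` ?T"
    by (rule bij_betw_preimage_eq_inv_into_image[OF bij])
  also note img
  finally have preimage: "{x \<in> ?I. \<phi> x \<in> ?T}
      = {w \<circ> transpose i j, w \<circ> transpose i k, w \<circ> transpose j k}" .
  then have "{w \<circ> transpose i j, w \<circ> transpose i k, w \<circ> transpose j k} \<subseteq> ?I"
    by blast
  then have "w j < w i" "w k < w j"
    using ijk by (auto simp: bruhat_interval_def bruhat_le_comp_transpose_iff[OF w])
  then show ?thesis
    by (intro exI[of _ i] exI[of _ j] exI[of _ k] conjI ijk preimage)
qed

theorem lemma4p2:
  fixes n :: nat and w :: "nat \<Rightarrow> nat" and \<phi> :: "(nat \<Rightarrow> nat) \<Rightarrow> (nat \<Rightarrow> nat)"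
  assumes w: "w \<in> perms n"
    and aut: "gamma_aut n w \<phi>"
    and we: "\<phi> w = id"
  shows "(\<forall>i j k. 1 \<le> i \<and> i < j \<and> j < k \<and> k \<le> n \<and> w i > w j \<and> w j > w k \<longrightarrow>
            (\<exists>a b c. 1 \<le> a \<and> a < b \<and> b < c \<and> c \<le> n \<and> bruhat_le n (transpose a c) w \<and>
               \<phi> ` {w \<circ> transpose i j, w \<circ> transpose i k, w \<circ> transpose j k}
                 = {transpose a b, transpose a c, transpose b c}))
       \<and> (\<forall>a b c. 1 \<le> a \<and> a < b \<and> b < c \<and> c \<le> n \<and> bruhat_le n (transpose a c) w \<longrightarrow>
            (\<exists>i j k. 1 \<le> i \<and> i < j \<and> j < k \<and> k \<le> n \<and> w i > w j \<and> w j > w k \<and>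
               {x \<in> bruhat_interval n w. \<phi> x \<in> {transpose a b, transpose a c, transpose b c}}
                 = {w \<circ> transpose i j, w \<circ> transpose i k, w \<circ> transpose j k}))"
proof (intro conjI allI impI, goal_cases)
  case (1 i j k)
  then show ?case
    by (elim conjE) (rule gamma_aut_image_inversion_triple[OF w aut, OF we])
next
  case (2 a b c)
  then show ?case
    by (elim conjE) (rule gamma_aut_preimage_reflection_triple[OF w aut, OF we])
qed

end
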